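(* For every nonempty face $F$ of $V_0$, the codimension of $F$ in $\mathcal F$ equals $\operatorname{genus}(\phi(F))$.
   Context: Let $\mathcal M$ be a regular matroid on a finite ground set $E$, represented by a totally unimodular matrix $M$ with columns $c_e$; $\mathcal F=\ker M\subseteq\mathbb R^E$ with Euclidean inner product, $\Lambda=\ker M\cap\mathbb Z^E$, $V_0=\{x\in\mathcal F:\|x\|\le\|x-\lambda\|\ \forall\lambda\in\Lambda\}$. A circuit in $\Lambda$ is a flow with coordinates in $\{-1,0,1\}$ whose support is a circuit (minimal dependent set of columns) of $\mathcal M$; $\Xi$ is the set of these; $F_\gamma=\{x\in\mathcal F:2\langle x,\gamma\rangle=\|\gamma\|^2\}$. For a nonempty face $F$ of $V_0$, $\mathcal U(F)=\{\gamma\in\Xi:F\subseteq F_\gamma\}$ and $\phi(F)=(S,\varepsilon)$ with $S=\bigcup_{\gamma\in\mathcal U(F)}\operatorname{supp}\gamma$ and $\varepsilon_e=\operatorname{sgn}\gamma_e$ for any $\gamma\in\mathcal U(F)$ containing $e$ (well defined). The genus of $(S,\varepsilon)$ is $\dim\ker M_S$, $M_S$ being the submatrix of columns indexed by $S$. *)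

theory Defs
  imports "HOL-Analysis.Analysis"
begin

text \<open>Ground set E is the finite type 'e; the matrix M has rows indexed by the finite
type 'r and columns c_e indexed by e.\<close>

definition sq_det :: "nat \<Rightarrow> (nat \<Rightarrow> nat \<Rightarrow> real) \<Rightarrow> real" where
  "sq_det k A = (\<Sum>p | p permutes {..<k}. of_int (sign p) * (\<Prod>i<k. A i (p i)))"

definition totally_unimodular :: "real^'e^'r \<Rightarrow> bool" where
  "totally_unimodular M \<longleftrightarrow>
     (\<forall>k (ri :: nat \<Rightarrow> 'r) (ci :: nat \<Rightarrow> 'e). inj_on ri {..<k} \<longrightarrow> inj_on ci {..<k} \<longrightarrow>
        sq_det k (\<lambda>i j. M $ ri i $ ci j) \<in> {-1, 0, 1})"

definition flows :: "real^'e^'r \<Rightarrow> (real^'e) set" where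
  "flows M = {x. M *v x = 0}"

definition flow_lattice :: "real^'e^'r \<Rightarrow> (real^'e) set" where
  "flow_lattice M = {x \<in> flows M. \<forall>e. x $ e \<in> \<int>}"

definition voronoi0 :: "real^'e^'r \<Rightarrow> (real^'e) set" where
  "voronoi0 M = {x \<in> flows M. \<forall>l \<in> flow_lattice M. norm x \<le> norm (x - l)}"

definition supp :: "real^'e \<Rightarrow> 'e set" where
  "supp x = {e. x $ e \<noteq> 0}"

definition col_dependent :: "real^'e^'r \<Rightarrow> 'e set \<Rightarrow> bool" where
  "col_dependent M S \<longleftrightarrow> (\<exists>x. x \<noteq> 0 \<and> supp x \<subseteq> S \<and> M *v x = 0)"

definition matroid_circuit :: "real^'e^'r \<Rightarrow> 'e set \<Rightarrow> bool" where
  "matroid_circuit M S \<longleftrightarrow> col_dependent M S \<and> (\<forall>T. T \<subset> S \<longrightarrow> \<not> col_dependent M T)"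

definition lattice_circuits :: "real^'e^'r \<Rightarrow> (real^'e) set" where
  "lattice_circuits M = {g \<in> flow_lattice M. (\<forall>e. g $ e \<in> {-1, 0, 1}) \<and> matroid_circuit M (supp g)}"

definition Fgamma :: "real^'e^'r \<Rightarrow> real^'e \<Rightarrow> (real^'e) set" where
  "Fgamma M g = {x \<in> flows M. 2 * (x \<bullet> g) = (norm g)^2}"

definition Ucirc :: "real^'e^'r \<Rightarrow> (real^'e) set \<Rightarrow> (real^'e) set" where
  "Ucirc M F = {g \<in> lattice_circuits M. F \<subseteq> Fgamma M g}"

definition phi :: "real^'e^'r \<Rightarrow> (real^'e) set \<Rightarrow> 'e set \<times> ('e \<Rightarrow> real)" where
  "phi M F = (let S = \<Union>g \<in> Ucirc M F. supp g in
     (S, \<lambda>e. if e \<in> S then sgn ((SOME g. g \<in> Ucirc M F \<and> e \<in> supp g) $ e) else 0))"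

text \<open>genus (S, eps) = dim ker M_S; ker M_S is identified with the vectors supported in S
lying in ker M.\<close>
definition genus :: "real^'e^'r \<Rightarrow> 'e set \<times> ('e \<Rightarrow> real) \<Rightarrow> nat" where
  "genus M Se = dim {x :: real^'e. supp x \<subseteq> fst Se \<and> M *v x = 0}"

definition codim_in_flows :: "real^'e^'r \<Rightarrow> (real^'e) set \<Rightarrow> int" where
  "codim_in_flows M F = int (dim (flows M)) - aff_dim F"

end

theory Submission
  imports Defs "Jordan_Normal_Form.Determinant"
begin

text \<open>For a totally unimodular \<open>M\<close>, Cramer's rule shows that every circuit of the matroid is,
  up to scaling, a flow with entries in \<open>{-1, 0, 1}\<close>, and every flow \<open>v\<close> is a nonnegative
  combination of such lattice circuits conformal to \<open>v\<close>. Hence \<open>V\<^sub>0\<close> is cut out by the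
  inequalities \<open>2 \<langle>x, \<gamma>\<rangle> \<le> \<parallel>\<gamma>\<parallel>\<^sup>2\<close>, \<open>\<gamma> \<in> \<Xi>\<close>, and these imply \<open>2 \<langle>x, v\<rangle> \<le> \<parallel>v\<parallel>\<^sub>1\<close> for every flow \<open>v\<close>.

  Let \<open>U\<close> be the circuits tight on a face \<open>F\<close> and \<open>S\<close> the union of their supports. A point of
  \<open>F\<close> that is strict for all other circuits can be moved inside \<open>F\<close> in every flow direction
  orthogonal to \<open>U\<close>, so \<open>codim F = dim (span U)\<close>. Conversely a flow \<open>z\<close> supported on \<open>S\<close> is a
  small perturbation of the tight flow \<open>\<Sum>U\<close>, whose support is \<open>S\<close>; the perturbation keeps the
  sign pattern, which forces \<open>\<Sum>U + \<epsilon> z\<close> to be tight, and a tight flow decomposes into tight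
  circuits. So \<open>span U = ker M\<^sub>S\<close>, whose dimension is the genus of \<open>\<phi>(F)\<close>.\<close>

no_notation Matrix.vec_index (infixl "$" 100)
no_notation Matrix.scalar_prod (infix "\<bullet>" 70)

section \<open>Conformal flows\<close>

definition conforms :: "real^'e \<Rightarrow> real^'e \<Rightarrow> bool" where
  "conforms w v \<longleftrightarrow> (\<forall>e. w $ e \<noteq> 0 \<longrightarrow> 0 < w $ e * v $ e)"

definition l1_norm :: "real^'e \<Rightarrow> real" where
  "l1_norm v = (\<Sum>e\<in>UNIV. \<bar>v $ e\<bar>)"

lemma conforms_refl: "conforms v v"
  unfolding conforms_def by (auto simp: zero_less_mult_iff)

lemma conforms_trans: "conforms w u \<Longrightarrow> conforms u v \<Longrightarrow> conforms w v"
  unfolding conforms_def by (smt (verit) mult_eq_0_iff zero_less_mult_iff)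

lemma conforms_supp_subset: "conforms w v \<Longrightarrow> supp w \<subseteq> supp v"
  unfolding conforms_def supp_def by auto

lemma conforms_sgn: "conforms w v \<Longrightarrow> sgn (v $ e) * w $ e = \<bar>w $ e\<bar>"
  unfolding conforms_def by (cases "w $ e = 0") (auto simp: zero_less_mult_iff sgn_if)

lemma supp_eq_empty_iff: "supp v = {} \<longleftrightarrow> v = 0"
  unfolding supp_def by (auto simp: Finite_Cartesian_Product.vec_eq_iff)

lemma l1_norm_eq_sgn_sum: "l1_norm v = (\<Sum>e\<in>UNIV. sgn (v $ e) * v $ e)"
  unfolding l1_norm_def by (simp add: abs_sgn mult.commute)

lemma subspace_flows: "subspace (flows M)"
  unfolding subspace_def flows_def
  by (auto simp: matrix_vector_right_distrib matrix_vector_mult_scaleR)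

text \<open>Subtracting a multiple of \<open>z\<close> and stopping at the first coordinate that reaches zero.\<close>
lemma conformal_reduce_support:
  fixes u z :: "real^'e"
  assumes zu: "supp z \<subseteq> supp u" and e0: "0 < z $ e0 * u $ e0"
  obtains t where "0 < t" "conforms (u - t *\<^sub>R z) u" "supp (u - t *\<^sub>R z) \<subset> supp u"
proof -
  define P where "P = {e. 0 < z $ e * u $ e}"
  define t where "t = Min ((\<lambda>e. u $ e / z $ e) ` P)"
  have "e0 \<in> P" using e0 unfolding P_def by simp
  then have "t \<in> (\<lambda>e. u $ e / z $ e) ` P" unfolding t_def by (intro Min_in) auto
  then obtain e1 where e1: "e1 \<in> P" "t = u $ e1 / z $ e1" by blast
  have t_le: "t \<le> u $ e / z $ e" if "e \<in> P" for e unfolding t_def using that by simp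
  have "0 < t" using e1 unfolding P_def by (auto simp: zero_less_divide_iff zero_less_mult_iff)
  have nonneg: "0 \<le> (u - t *\<^sub>R z) $ e * u $ e" for e
  proof (cases "e \<in> P")
    case True
    then have "t * (z $ e * u $ e) \<le> (u $ e / z $ e) * (z $ e * u $ e)"
      using t_le unfolding P_def by (intro mult_right_mono) auto
    also have "\<dots> = u $ e * u $ e" using True unfolding P_def by auto
    finally show ?thesis by (simp add: algebra_simps)
  next
    case False
    then have "t * (z $ e * u $ e) \<le> 0"
      using \<open>0 < t\<close> unfolding P_def by (simp add: mult_nonneg_nonpos)
    then show ?thesis by (simp add: algebra_simps) (smt (verit) zero_le_square)
  qed
  have "conforms (u - t *\<^sub>R z) u"
    unfolding conforms_def
  proof (intro allI impI)
    fix e assume ne: "(u - t *\<^sub>R z) $ e \<noteq> 0"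
    then have "u $ e \<noteq> 0" using zu unfolding supp_def by auto
    with ne nonneg[of e] show "0 < (u - t *\<^sub>R z) $ e * u $ e" by (simp add: less_le)
  qed
  moreover have "e1 \<in> supp u" "e1 \<notin> supp (u - t *\<^sub>R z)"
    using e1 unfolding P_def supp_def by auto
  ultimately show thesis using that \<open>0 < t\<close> conforms_supp_subset by blast
qed

lemma conformal_circuit_exists:
  assumes "v \<in> flows M" "v \<noteq> 0"
  obtains u where "u \<in> flows M" "u \<noteq> 0" "conforms u v" "matroid_circuit M (supp u)"
proof -
  let ?Q = "\<lambda>u. u \<in> flows M \<and> u \<noteq> 0 \<and> conforms u v"
  have "?Q v" using assms conforms_refl by auto
  then obtain u where u: "?Q u" and u_min: "\<And>y. ?Q y \<Longrightarrow> card (supp u) \<le> card (supp y)"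
    using ex_has_least_nat[of ?Q v "\<lambda>u. card (supp u)"] by blast
  have "\<not> col_dependent M T" if T: "T \<subset> supp u" for T
  proof
    assume "col_dependent M T"
    then obtain z where z: "z \<noteq> 0" "supp z \<subseteq> T" "M *v z = 0"
      unfolding col_dependent_def by auto
    then obtain e0 where "z $ e0 \<noteq> 0" by (auto simp: Finite_Cartesian_Product.vec_eq_iff)
    moreover have "u $ e0 \<noteq> 0" using \<open>z $ e0 \<noteq> 0\<close> z(2) T unfolding supp_def by auto
    ultimately have ne: "z $ e0 * u $ e0 \<noteq> 0" by simp
    define z' where "z' = sgn (z $ e0 * u $ e0) *\<^sub>R z"
    have "0 < sgn (z $ e0 * u $ e0) * (z $ e0 * u $ e0)"
      using ne by (metis abs_sgn mult.commute zero_less_abs_iff)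
    then have z'_e0: "0 < z' $ e0 * u $ e0" unfolding z'_def by (simp add: mult.assoc)
    have "supp z' = supp z" using ne unfolding z'_def supp_def by (auto simp: sgn_zero_iff)
    then have z'_T: "supp z' \<subseteq> T" using z(2) by simp
    then have "supp z' \<subseteq> supp u" using T by blast
    then obtain t where t: "0 < t" "conforms (u - t *\<^sub>R z') u" "supp (u - t *\<^sub>R z') \<subset> supp u"
      by (rule conformal_reduce_support[OF _ z'_e0])
    obtain e2 where "e2 \<in> supp u" "e2 \<notin> T" using T by auto
    then have "(u - t *\<^sub>R z') $ e2 \<noteq> 0" using z'_T unfolding supp_def by auto
    moreover have "u - t *\<^sub>R z' \<in> flows M"
      using u z(3) unfolding flows_def z'_def
      by (simp add: matrix_vector_mult_diff_distrib matrix_vector_mult_scaleR)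
    moreover have "conforms (u - t *\<^sub>R z') v" using conforms_trans[OF t(2)] u by blast
    ultimately have "?Q (u - t *\<^sub>R z')" by force
    with u_min have "card (supp u) \<le> card (supp (u - t *\<^sub>R z'))" by blast
    moreover have "card (supp (u - t *\<^sub>R z')) < card (supp u)"
      using t(3) by (simp add: psubset_card_mono)
    ultimately show False by simp
  qed
  moreover have "col_dependent M (supp u)"
    using u unfolding col_dependent_def flows_def by auto
  ultimately show thesis using that u unfolding matroid_circuit_def by blast
qed

section \<open>Circuits of totally unimodular matrices\<close>

definition square_submatrix :: "real^'e^'r \<Rightarrow> (nat \<Rightarrow> 'r) \<Rightarrow> (nat \<Rightarrow> 'e) \<Rightarrow> nat \<Rightarrow> real mat" where
  "square_submatrix M ri ci k = Matrix.mat k k (\<lambda>(i, j). M $ ri i $ ci j)"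

lemma sq_det_eq_det: "sq_det k A = Determinant.det (Matrix.mat k k (\<lambda>(i, j). A i j))"
  unfolding sq_det_def Determinant.det_def
  by (auto intro!: sum.cong prod.cong simp: atLeast0LessThan permutes_def)

lemma det_square_submatrix_unimodular:
  assumes "totally_unimodular M" "inj_on ri {..<k}" "inj_on ci {..<k}"
  shows "Determinant.det (square_submatrix M ri ci k) \<in> {-1, 0, 1}"
  using assms unfolding totally_unimodular_def square_submatrix_def sq_det_eq_det[symmetric]
  by blast

text \<open>Cramer's rule: the entries of the solution are quotients of two minors of \<open>M\<close>.\<close>
lemma totally_unimodular_solution_entry:
  assumes TU: "totally_unimodular M" and ri: "inj_on ri {..<k}" and ci: "inj_on ci {..<k}"
    and f: "f \<notin> ci ` {..<k}" and nonsing: "Determinant.det (square_submatrix M ri ci k) \<noteq> 0"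
    and x: "x \<in> carrier_vec k"
    and sol: "square_submatrix M ri ci k *\<^sub>v x = Matrix.vec k (\<lambda>i. M $ ri i $ f)"
    and j: "j < k"
  shows "vec_index x j \<in> {-1, 0, 1}"
proof -
  let ?A = "square_submatrix M ri ci k"
  have "replace_col ?A (Matrix.vec k (\<lambda>i. M $ ri i $ f)) j = square_submatrix M ri (ci(j := f)) k"
    unfolding replace_col_def square_submatrix_def by (rule eq_matI) auto
  moreover have "inj_on (ci(j := f)) {..<k}"
    using ci f j by (auto simp: inj_on_def)
  ultimately have "Determinant.det (replace_col ?A (?A *\<^sub>v x) j) \<in> {-1, 0, 1}"
    using det_square_submatrix_unimodular[OF TU ri] unfolding sol by metis
  moreover have "Determinant.det (replace_col ?A (?A *\<^sub>v x) j) = vec_index x j * Determinant.det ?A"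
    by (rule cramer_lemma_mat[OF _ x j]) (simp add: square_submatrix_def)
  moreover have "Determinant.det ?A \<in> {-1, 1}"
    using det_square_submatrix_unimodular[OF TU ri ci] nonsing by auto
  ultimately show ?thesis by auto
qed

definition restricted_row :: "real^'e^'r \<Rightarrow> 'e set \<Rightarrow> 'r \<Rightarrow> real^'e" where
  "restricted_row M C r = (\<chi> e. if e \<in> C then M $ r $ e else 0)"

lemma inner_restricted_row:
  assumes "supp y \<subseteq> C"
  shows "restricted_row M C r \<bullet> y = (M *v y) $ r"
proof -
  have "restricted_row M C r \<bullet> y = (\<Sum>e\<in>UNIV. (if e \<in> C then M $ r $ e else 0) * y $ e)"
    unfolding inner_vec_def restricted_row_def by simp
  also have "\<dots> = (\<Sum>e\<in>UNIV. M $ r $ e * y $ e)"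
    using assms unfolding supp_def by (intro sum.cong) auto
  finally show ?thesis by (simp add: matrix_vector_mult_def)
qed

lemma supported_eq_substandard: "{y. supp y \<subseteq> C} = {y. \<forall>e. e \<notin> C \<longrightarrow> y $ e = 0}"
  unfolding supp_def by auto

lemma dim_supported: "dim {y :: real^'e. supp y \<subseteq> C} = card C"
  using dim_substandard_cart[of C, where 'a = real] unfolding supported_eq_substandard
  by (simp add: dim_vec_eq)

lemma subspace_supported: "subspace {y :: real^'e. supp y \<subseteq> C}"
  using subspace_substandard_cart[of "\<lambda>e. e \<notin> C"] unfolding supported_eq_substandard
  by (simp add: vec.subspace_def subspace_def)

text \<open>Row rank equals column rank, for the columns indexed by \<open>C\<close>.\<close>
lemma dim_restricted_rows:
  fixes M :: "real^'e^'r"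
  assumes indep: "\<not> col_dependent M C"
  shows "dim (range (restricted_row M C)) = card C"
proof -
  let ?\<rho> = "restricted_row M C"
  let ?P = "{y :: real^'e. supp y \<subseteq> C}"
  have rows: "range ?\<rho> \<subseteq> ?P"
    unfolding supp_def restricted_row_def by (auto split: if_splits)
  have span_P: "span ?P = ?P" by (rule span_eq_iff[THEN iffD2, OF subspace_supported])
  have "\<not> span (range ?\<rho>) \<subset> span ?P"
  proof
    assume "span (range ?\<rho>) \<subset> span ?P"
    then obtain y where y: "y \<noteq> 0" "y \<in> span ?P"
        "\<And>x. x \<in> span (range ?\<rho>) \<Longrightarrow> Linear_Algebra.orthogonal y x"
      by (rule orthogonal_to_subspace_exists_gen) blast
    have "y \<in> ?P" using y(2) span_P by simp
    moreover have "M *v y = 0"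
    proof (subst Finite_Cartesian_Product.vec_eq_iff, intro allI)
      fix r
      have "Linear_Algebra.orthogonal y (?\<rho> r)" by (rule y(3)) (simp add: span_base)
      then show "(M *v y) $ r = 0 $ r"
        using inner_restricted_row[of y C M r] \<open>y \<in> ?P\<close>
        by (simp add: Linear_Algebra.orthogonal_def inner_commute)
    qed
    ultimately show False using indep y(1) unfolding col_dependent_def by blast
  qed
  moreover have "span (range ?\<rho>) \<subseteq> span ?P" using rows by (rule span_mono)
  ultimately have "span (range ?\<rho>) = ?P" using span_P by blast
  then show ?thesis using dim_span[of "range ?\<rho>"] dim_supported[of C] by simp
qed

lemma sum_supported_reindex:
  assumes "supp y \<subseteq> C" "bij_betw ci {..<k} C"
  shows "(\<Sum>e\<in>UNIV. a e * y $ e) = (\<Sum>j<k. a (ci j) * y $ ci j)"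
proof -
  have "(\<Sum>e\<in>UNIV. a e * y $ e) = (\<Sum>e\<in>C. a e * y $ e)"
    using assms(1) unfolding supp_def by (intro sum.mono_neutral_right) auto
  also have "\<dots> = (\<Sum>j<k. a (ci j) * y $ ci j)"
    using sum.reindex_bij_betw[OF assms(2), of "\<lambda>e. a e * y $ e"] by simp
  finally show ?thesis .
qed

lemma vector_with_coordinates:
  assumes ci: "bij_betw ci {..<k} C" and v: "v \<in> carrier_vec k" "v \<noteq> 0\<^sub>v k"
  obtains y :: "real^'e" where "y \<noteq> 0" "supp y \<subseteq> C" "\<And>j. j < k \<Longrightarrow> y $ ci j = vec_index v j"
proof
  let ?y = "\<chi> e. if e \<in> C then vec_index v (the_inv_into {..<k} ci e) else 0"
  show y_ci: "?y $ ci j = vec_index v j" if "j < k" for j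
    using ci that by (auto simp: bij_betw_def the_inv_into_f_f)
  show "supp ?y \<subseteq> C" unfolding supp_def by auto
  show "?y \<noteq> 0"
  proof
    assume "?y = 0"
    then have "v = 0\<^sub>v k" using y_ci v(1) by (intro eq_vecI) auto
    with v(2) show False ..
  qed
qed

lemma nonsingular_square_submatrix:
  fixes M :: "real^'e^'r"
  assumes indep: "\<not> col_dependent M C" and ci: "bij_betw ci {..<k} C"
    and rows: "range (restricted_row M C) \<subseteq> span (restricted_row M C ` ri ` {..<k})"
  shows "Determinant.det (square_submatrix M ri ci k) \<noteq> 0"
proof
  let ?A = "square_submatrix M ri ci k"
  assume "Determinant.det ?A = 0"
  then obtain v where v: "v \<in> carrier_vec k" "v \<noteq> 0\<^sub>v k" "?A *\<^sub>v v = 0\<^sub>v k"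
    using det_0_iff_vec_prod_zero_field[of ?A k] by (auto simp: square_submatrix_def)
  obtain y where y: "y \<noteq> 0" "supp y \<subseteq> C" "\<And>j. j < k \<Longrightarrow> y $ ci j = vec_index v j"
    using vector_with_coordinates[OF ci v(1,2)] by blast
  have "restricted_row M C (ri i) \<bullet> y = 0" if "i < k" for i
  proof -
    have "restricted_row M C (ri i) \<bullet> y = (\<Sum>e\<in>UNIV. M $ ri i $ e * y $ e)"
      using inner_restricted_row[OF y(2)] by (simp add: matrix_vector_mult_def)
    also have "\<dots> = (\<Sum>j<k. M $ ri i $ ci j * vec_index v j)"
      using sum_supported_reindex[OF y(2) ci] y(3) by simp
    also have "\<dots> = vec_index (?A *\<^sub>v v) i"
      using that v(1) by (simp add: square_submatrix_def scalar_prod_def lessThan_atLeast0)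
    finally show ?thesis using v(3) that by simp
  qed
  then have "Linear_Algebra.orthogonal y b" if "b \<in> restricted_row M C ` ri ` {..<k}" for b
    using that by (auto simp: Linear_Algebra.orthogonal_def inner_commute)
  then have "Linear_Algebra.orthogonal y (restricted_row M C r)" for r
    using orthogonal_to_span rows by blast
  then have "(M *v y) $ r = 0" for r
    using inner_restricted_row[OF y(2), of M r] by (simp add: Linear_Algebra.orthogonal_def inner_commute)
  then have "M *v y = 0" by (simp add: Finite_Cartesian_Product.vec_eq_iff)
  with y(1,2) indep show False unfolding col_dependent_def by blast
qed

text \<open>The rows are chosen so that their restrictions to \<open>C\<close> form a basis of the restricted row space.\<close>
lemma independent_columns_nonsingular_submatrix:
  fixes M :: "real^'e^'r"
  assumes indep: "\<not> col_dependent M C"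
  obtains ri ci where "inj_on ri {..<card C}" "bij_betw ci {..<card C} C"
    "Determinant.det (square_submatrix M ri ci (card C)) \<noteq> 0"
proof -
  let ?\<rho> = "restricted_row M C"
  define k where "k = card C"
  obtain B where B: "B \<subseteq> range ?\<rho>" "range ?\<rho> \<subseteq> span B" "card B = dim (range ?\<rho>)"
    by (rule basis_exists)
  then obtain R where R: "inj_on ?\<rho> R" "B = ?\<rho> ` R" unfolding subset_image_inj by blast
  have "card R = card B" unfolding R(2) using card_image[OF R(1)] by simp
  then have "card R = k" using B(3) dim_restricted_rows[OF indep] unfolding k_def by simp
  then obtain ri where ri: "bij_betw ri {..<k} R"
    using ex_bij_betw_nat_finite[of R] by (auto simp: atLeast0LessThan)
  obtain ci where ci: "bij_betw ci {..<k} C"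
    using ex_bij_betw_nat_finite[of C] unfolding k_def by (auto simp: atLeast0LessThan)
  have "range ?\<rho> \<subseteq> span (?\<rho> ` ri ` {..<k})"
    using B(2) R(2) ri unfolding bij_betw_def by simp
  then have "Determinant.det (square_submatrix M ri ci k) \<noteq> 0"
    by (rule nonsingular_square_submatrix[OF indep ci])
  moreover have "inj_on ri {..<k}" using ri by (rule bij_betw_imp_inj_on)
  ultimately show thesis using that ci unfolding k_def by blast
qed

text \<open>Without \<open>f\<close> the circuit is independent; \<open>u\<^sub>e / u\<^sub>f\<close> then solves a nonsingular square system
  whose right-hand side is the column of \<open>f\<close>.\<close>
lemma totally_unimodular_circuit_abs_eq:
  fixes M :: "real^'e^'r"
  assumes TU: "totally_unimodular M" and u: "M *v u = 0" and circ: "matroid_circuit M (supp u)"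
    and e: "e \<in> supp u" and f: "f \<in> supp u"
  shows "\<bar>u $ e\<bar> = \<bar>u $ f\<bar>"
proof (cases "e = f")
  case False
  let ?C = "supp u - {f}"
  define k where "k = card ?C"
  have "\<not> col_dependent M ?C" using circ f unfolding matroid_circuit_def by blast
  then obtain ri ci where ri: "inj_on ri {..<k}" and ci: "bij_betw ci {..<k} ?C"
    and nonsing: "Determinant.det (square_submatrix M ri ci k) \<noteq> 0"
    unfolding k_def by (rule independent_columns_nonsingular_submatrix)
  obtain j where j: "j < k" "ci j = e"
    using ci e False unfolding bij_betw_def by (metis Diff_iff imageE lessThan_iff singletonD)
  have uf: "u $ f \<noteq> 0" using f unfolding supp_def by simp
  define x where "x = Matrix.vec k (\<lambda>j. u $ ci j / - u $ f)"
  have "square_submatrix M ri ci k *\<^sub>v x = Matrix.vec k (\<lambda>i. M $ ri i $ f)"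
  proof (rule eq_vecI)
    fix i assume "i < dim_vec (Matrix.vec k (\<lambda>i. M $ ri i $ f))"
    then have i: "i < k" by simp
    have "0 = (\<Sum>e\<in>UNIV. M $ ri i $ e * u $ e)"
      using u by (simp add: matrix_vector_mult_def Finite_Cartesian_Product.vec_eq_iff)
    also have "\<dots> = (\<Sum>e\<in>supp u. M $ ri i $ e * u $ e)"
      unfolding supp_def by (intro sum.mono_neutral_right) auto
    also have "\<dots> = M $ ri i $ f * u $ f + (\<Sum>j<k. M $ ri i $ ci j * u $ ci j)"
      using f sum.reindex_bij_betw[OF ci, of "\<lambda>e. M $ ri i $ e * u $ e"] by (simp add: sum.remove)
    finally have "(\<Sum>j<k. M $ ri i $ ci j * u $ ci j) / - u $ f = M $ ri i $ f"
      using uf by (simp add: field_simps)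
    then show "vec_index (square_submatrix M ri ci k *\<^sub>v x) i = vec_index (Matrix.vec k (\<lambda>i. M $ ri i $ f)) i"
      using i by (simp add: square_submatrix_def x_def scalar_prod_def lessThan_atLeast0
          sum_divide_distrib sum_negf)
  qed (simp add: square_submatrix_def)
  moreover have "f \<notin> ci ` {..<k}" using ci unfolding bij_betw_def by simp
  ultimately have "vec_index x j \<in> {-1, 0, 1}"
    using totally_unimodular_solution_entry[OF TU ri bij_betw_imp_inj_on[OF ci] _ nonsing _ _ j(1)]
    unfolding x_def by simp
  moreover have "vec_index x j = u $ e / - u $ f" using j unfolding x_def by simp
  moreover have "u $ e \<noteq> 0" using e unfolding supp_def by simp
  ultimately show ?thesis using uf by (auto simp: field_simps)
qed simp

lemma lattice_circuit_flow: "g \<in> lattice_circuits M \<Longrightarrow> g \<in> flows M"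
  unfolding lattice_circuits_def flow_lattice_def by auto

lemma lattice_circuit_entry: "g \<in> lattice_circuits M \<Longrightarrow> g $ e \<in> {-1, 0, 1}"
  unfolding lattice_circuits_def by auto

lemma finite_lattice_circuits: "finite (lattice_circuits M)"
proof (rule finite_subset)
  show "lattice_circuits M \<subseteq> (\<lambda>f. \<chi> e. f e) ` (UNIV \<rightarrow>\<^sub>E {-1, 0, 1})"
  proof
    fix g assume "g \<in> lattice_circuits M"
    then have "(\<lambda>e. g $ e) \<in> UNIV \<rightarrow>\<^sub>E {-1, 0, 1}" using lattice_circuit_entry by blast
    then show "g \<in> (\<lambda>f. \<chi> e. f e) ` (UNIV \<rightarrow>\<^sub>E {-1, 0, 1})" by (rule rev_image_eqI) simp
  qed
qed (intro finite_imageI finite_PiE; simp)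

lemma lattice_circuit_norm_sq:
  assumes "g \<in> lattice_circuits M"
  shows "(norm g)\<^sup>2 = l1_norm g"
proof -
  have "g $ e * g $ e = \<bar>g $ e\<bar>" for e using lattice_circuit_entry[OF assms, of e] by auto
  then show ?thesis unfolding power2_norm_eq_inner inner_vec_def l1_norm_def by simp
qed

lemma conformal_lattice_circuit_exists:
  assumes TU: "totally_unimodular M" and v: "v \<in> flows M" "v \<noteq> 0"
  obtains g where "g \<in> lattice_circuits M" "g \<noteq> 0" "conforms g v"
proof -
  obtain u where u: "u \<in> flows M" "u \<noteq> 0" "conforms u v" "matroid_circuit M (supp u)"
    using conformal_circuit_exists[OF v] .
  then obtain f where f: "f \<in> supp u" using supp_eq_empty_iff by blast
  define c where "c = \<bar>u $ f\<bar>"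
  have "0 < c" using f unfolding c_def supp_def by simp
  define g where "g = (1 / c) *\<^sub>R u"
  have entry: "g $ e \<in> {-1, 0, 1}" for e
  proof (cases "e \<in> supp u")
    case True
    then have "\<bar>u $ e\<bar> = c"
      using totally_unimodular_circuit_abs_eq[OF TU _ u(4) _ f] u(1) unfolding c_def flows_def by blast
    then show ?thesis using \<open>0 < c\<close> unfolding g_def by (auto simp: abs_if split: if_splits)
  qed (simp add: g_def supp_def)
  have supp_g: "supp g = supp u" using \<open>0 < c\<close> unfolding g_def supp_def by simp
  have "conforms g u" using \<open>0 < c\<close> unfolding g_def conforms_def
    by (auto simp: zero_less_divide_iff zero_less_mult_iff linorder_neq_iff)
  then have "conforms g v" using u(3) by (rule conforms_trans)
  moreover have "g \<in> lattice_circuits M"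
    unfolding lattice_circuits_def flow_lattice_def
  proof (intro CollectI conjI allI)
    show "g \<in> flows M" using u(1) unfolding g_def flows_def by (simp add: matrix_vector_mult_scaleR)
    show "g $ e \<in> \<int>" for e using entry[of e] by auto
    show "g $ e \<in> {-1, 0, 1}" for e by (rule entry)
    show "matroid_circuit M (supp g)" using supp_g u(4) by simp
  qed
  moreover have "g \<noteq> 0" using supp_g u(2) supp_eq_empty_iff by metis
  ultimately show thesis using that by blast
qed

lemma conformal_decomposition:
  assumes TU: "totally_unimodular M" and v: "v \<in> flows M"
  shows "\<exists>\<alpha>. (\<forall>g. 0 \<le> \<alpha> g) \<and> (\<forall>g\<in>lattice_circuits M. \<alpha> g \<noteq> 0 \<longrightarrow> conforms g v)
    \<and> v = (\<Sum>g\<in>lattice_circuits M. \<alpha> g *\<^sub>R g)"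
  using v
proof (induction "card (supp v)" arbitrary: v rule: less_induct)
  case less
  show ?case
  proof (cases "v = 0")
    case True
    then show ?thesis by (intro exI[of _ "\<lambda>_. 0"]) auto
  next
    case False
    obtain \<gamma> where \<gamma>: "\<gamma> \<in> lattice_circuits M" "\<gamma> \<noteq> 0" "conforms \<gamma> v"
      using conformal_lattice_circuit_exists[OF TU less.prems False] .
    obtain e0 where "\<gamma> $ e0 \<noteq> 0"
      using \<gamma>(2) by (auto simp: Finite_Cartesian_Product.vec_eq_iff)
    then have "0 < \<gamma> $ e0 * v $ e0" using \<gamma>(3) unfolding conforms_def by blast
    with conforms_supp_subset[OF \<gamma>(3)]
    obtain t where t: "0 < t" "conforms (v - t *\<^sub>R \<gamma>) v" "supp (v - t *\<^sub>R \<gamma>) \<subset> supp v"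
      by (rule conformal_reduce_support)
    have flow: "v - t *\<^sub>R \<gamma> \<in> flows M"
      using less.prems lattice_circuit_flow[OF \<gamma>(1)]
      by (intro subspace_diff subspace_scale subspace_flows)
    have "card (supp (v - t *\<^sub>R \<gamma>)) < card (supp v)"
      using t(3) by (simp add: psubset_card_mono)
    then obtain \<alpha> where \<alpha>: "\<forall>g. 0 \<le> \<alpha> g"
        "\<forall>g\<in>lattice_circuits M. \<alpha> g \<noteq> 0 \<longrightarrow> conforms g (v - t *\<^sub>R \<gamma>)"
        "v - t *\<^sub>R \<gamma> = (\<Sum>g\<in>lattice_circuits M. \<alpha> g *\<^sub>R g)"
      using less.hyps[OF _ flow] by blast
    let ?\<beta> = "\<lambda>g. \<alpha> g + (if g = \<gamma> then t else 0)"
    have "(\<Sum>g\<in>lattice_circuits M. ?\<beta> g *\<^sub>R g) = (\<Sum>g\<in>lattice_circuits M. \<alpha> g *\<^sub>R g) + t *\<^sub>R \<gamma>"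
      using \<gamma>(1) finite_lattice_circuits[of M]
      by (simp add: scaleR_add_left sum.distrib if_distrib[of "\<lambda>c. c *\<^sub>R _"] sum.delta cong: if_cong)
    also have "\<dots> = v" unfolding \<alpha>(3)[symmetric] by simp
    finally have "v = (\<Sum>g\<in>lattice_circuits M. ?\<beta> g *\<^sub>R g)" ..
    moreover have "\<forall>g. 0 \<le> ?\<beta> g" using \<alpha>(1) t(1) by (simp add: add_nonneg_nonneg)
    moreover have "\<forall>g\<in>lattice_circuits M. ?\<beta> g \<noteq> 0 \<longrightarrow> conforms g v"
    proof (intro ballI impI)
      fix g assume "g \<in> lattice_circuits M" "?\<beta> g \<noteq> 0"
      then show "conforms g v"
        using \<alpha>(2) \<gamma>(3) conforms_trans[OF _ t(2)] by (cases "g = \<gamma>") simp_all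
    qed
    ultimately show ?thesis by (intro exI[of _ ?\<beta>]) blast
  qed
qed

lemma l1_norm_conformal_sum:
  assumes "finite G" "\<forall>g\<in>G. 0 \<le> \<alpha> g" "\<forall>g\<in>G. \<alpha> g \<noteq> 0 \<longrightarrow> conforms g v"
    and v: "v = (\<Sum>g\<in>G. \<alpha> g *\<^sub>R g)"
  shows "l1_norm v = (\<Sum>g\<in>G. \<alpha> g * l1_norm g)"
proof -
  have "l1_norm v = (\<Sum>e\<in>UNIV. \<Sum>g\<in>G. \<alpha> g * (sgn (v $ e) * g $ e))"
    unfolding l1_norm_eq_sgn_sum
    by (subst (2) v) (simp add: sum_distrib_left mult.left_commute)
  also have "\<dots> = (\<Sum>g\<in>G. \<alpha> g * (\<Sum>e\<in>UNIV. sgn (v $ e) * g $ e))"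
    by (subst sum.swap) (simp add: sum_distrib_left)
  also have "\<dots> = (\<Sum>g\<in>G. \<alpha> g * l1_norm g)"
  proof (rule sum.cong[OF refl])
    fix g assume "g \<in> G"
    then show "\<alpha> g * (\<Sum>e\<in>UNIV. sgn (v $ e) * g $ e) = \<alpha> g * l1_norm g"
      using assms(3) conforms_sgn[of g v] unfolding l1_norm_def by (cases "\<alpha> g = 0") auto
  qed
  finally show ?thesis .
qed

section \<open>The Voronoi cell\<close>

lemma norm_le_norm_diff_iff:
  fixes x l :: "'a::real_inner"
  shows "norm x \<le> norm (x - l) \<longleftrightarrow> 2 * (x \<bullet> l) \<le> (norm l)\<^sup>2"
proof -
  have "norm x \<le> norm (x - l) \<longleftrightarrow> (norm x)\<^sup>2 \<le> (norm (x - l))\<^sup>2"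
    by (meson norm_ge_zero power2_le_imp_le power_mono)
  moreover have "(norm (x - l))\<^sup>2 = (norm x)\<^sup>2 - 2 * (x \<bullet> l) + (norm l)\<^sup>2"
    by (simp add: power2_norm_eq_inner inner_diff_left inner_diff_right inner_commute)
  ultimately show ?thesis by linarith
qed

lemma abs_le_square_int:
  assumes "(z :: real) \<in> \<int>"
  shows "\<bar>z\<bar> \<le> z * z"
proof -
  obtain n where n: "z = of_int n" using assms by (elim Ints_cases)
  have "\<bar>n\<bar> \<le> n * n"
    using mult_left_mono[of 1 "\<bar>n\<bar>" "\<bar>n\<bar>"] abs_mult_self_eq[of n] by (cases "n = 0") auto
  then have "real_of_int \<bar>n\<bar> \<le> real_of_int (n * n)" by linarith
  then show ?thesis unfolding n by simp
qed

lemma l1_norm_le_norm_sq: "(\<And>e. v $ e \<in> \<int>) \<Longrightarrow> l1_norm v \<le> (norm v)\<^sup>2"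
  unfolding l1_norm_def power2_norm_eq_inner inner_vec_def
  by (intro sum_mono) (simp add: abs_le_square_int)

text \<open>Decomposing \<open>v\<close> conformally into circuits turns the circuit inequalities into a bound
  by \<open>\<Sum> \<alpha>\<^sub>g \<parallel>g\<parallel>\<^sup>2 = \<Sum> \<alpha>\<^sub>g \<parallel>g\<parallel>\<^sub>1 = \<parallel>v\<parallel>\<^sub>1\<close>.\<close>
lemma inner_le_l1_norm_if_circuit_ineqs:
  assumes TU: "totally_unimodular M"
    and circ: "\<forall>g\<in>lattice_circuits M. 2 * (x \<bullet> g) \<le> (norm g)\<^sup>2" and v: "v \<in> flows M"
  shows "2 * (x \<bullet> v) \<le> l1_norm v"
proof -
  obtain \<alpha> where \<alpha>: "\<forall>g. 0 \<le> \<alpha> g" "\<forall>g\<in>lattice_circuits M. \<alpha> g \<noteq> 0 \<longrightarrow> conforms g v"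
      "v = (\<Sum>g\<in>lattice_circuits M. \<alpha> g *\<^sub>R g)"
    using conformal_decomposition[OF TU v] by blast
  have "2 * (x \<bullet> v) = (\<Sum>g\<in>lattice_circuits M. \<alpha> g * (2 * (x \<bullet> g)))"
    by (subst \<alpha>(3)) (simp add: inner_sum_right sum_distrib_left mult.left_commute)
  also have "\<dots> \<le> (\<Sum>g\<in>lattice_circuits M. \<alpha> g * l1_norm g)"
  proof (intro sum_mono mult_left_mono)
    fix g assume "g \<in> lattice_circuits M"
    then show "2 * (x \<bullet> g) \<le> l1_norm g" using circ lattice_circuit_norm_sq[of g M] by auto
  qed (use \<alpha>(1) in simp)
  also have "\<dots> = l1_norm v"
    using l1_norm_conformal_sum[OF finite_lattice_circuits _ _ \<alpha>(3)] \<alpha>(1,2) by simp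
  finally show ?thesis .
qed

lemma voronoi0_eq_circuit_halfspaces:
  assumes TU: "totally_unimodular M"
  shows "voronoi0 M = {x \<in> flows M. \<forall>g\<in>lattice_circuits M. 2 * (x \<bullet> g) \<le> (norm g)\<^sup>2}"
proof (intro equalityI subsetI)
  fix x assume "x \<in> voronoi0 M"
  then show "x \<in> {x \<in> flows M. \<forall>g\<in>lattice_circuits M. 2 * (x \<bullet> g) \<le> (norm g)\<^sup>2}"
    unfolding voronoi0_def lattice_circuits_def by (auto simp: norm_le_norm_diff_iff)
next
  fix x assume x: "x \<in> {x \<in> flows M. \<forall>g\<in>lattice_circuits M. 2 * (x \<bullet> g) \<le> (norm g)\<^sup>2}"
  have "norm x \<le> norm (x - l)" if l: "l \<in> flow_lattice M" for l
  proof -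
    have "2 * (x \<bullet> l) \<le> l1_norm l"
      using x l inner_le_l1_norm_if_circuit_ineqs[OF TU] unfolding flow_lattice_def by auto
    also have "\<dots> \<le> (norm l)\<^sup>2" using l unfolding flow_lattice_def by (intro l1_norm_le_norm_sq) auto
    finally show ?thesis by (simp add: norm_le_norm_diff_iff)
  qed
  with x show "x \<in> voronoi0 M" unfolding voronoi0_def by auto
qed

section \<open>Faces of the Voronoi cell\<close>

lemma sgn_add_dominant:
  fixes a b k :: real
  assumes a: "\<bar>a\<bar> < k" and "b = 0 \<Longrightarrow> a = 0" and b: "b \<noteq> 0 \<Longrightarrow> 1 \<le> \<bar>b\<bar>"
  shows "sgn (a + k * b) = sgn b"
proof -
  have "0 < k" using a by linarith
  consider "b = 0" | "1 \<le> b" | "b \<le> -1" using b by linarith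
  then show ?thesis
  proof cases
    case 2
    then have "k \<le> k * b" using \<open>0 < k\<close> by simp
    then have "0 < a + k * b" using a by linarith
    then show ?thesis using 2 by simp
  next
    case 3
    then have "k * b \<le> - k" using \<open>0 < k\<close> mult_left_mono[OF 3, of k] by simp
    then have "a + k * b < 0" using a by linarith
    then show ?thesis using 3 by simp
  qed (use assms(2) in simp)
qed

lemma l1_norm_same_signs:
  assumes "\<And>e. sgn (v $ e) = sgn (y $ e)"
  shows "l1_norm v = (\<Sum>e\<in>UNIV. sgn (y $ e) * v $ e)"
  unfolding l1_norm_eq_sgn_sum using assms by simp

lemma l1_norm_small_perturbation:
  assumes zero: "\<And>e. y $ e = 0 \<Longrightarrow> z $ e = 0" and big: "\<And>e. y $ e \<noteq> 0 \<Longrightarrow> 1 \<le> \<bar>y $ e\<bar>"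
    and s: "\<bar>s\<bar> = 1" and k: "l1_norm z < k"
  shows "l1_norm (s *\<^sub>R z + k *\<^sub>R y) = s * (\<Sum>e\<in>UNIV. sgn (y $ e) * z $ e) + k * l1_norm y"
proof -
  have "\<bar>s * z $ e\<bar> < k" for e
    using s k member_le_sum[of e UNIV "\<lambda>e. \<bar>z $ e\<bar>"] unfolding l1_norm_def by (simp add: abs_mult)
  then have "sgn ((s *\<^sub>R z + k *\<^sub>R y) $ e) = sgn (y $ e)" for e
    using sgn_add_dominant[of "s * z $ e" k "y $ e"] zero big by simp
  then have "l1_norm (s *\<^sub>R z + k *\<^sub>R y) = (\<Sum>e\<in>UNIV. sgn (y $ e) * (s *\<^sub>R z + k *\<^sub>R y) $ e)"
    by (rule l1_norm_same_signs)
  then show ?thesis unfolding l1_norm_eq_sgn_sum[of y]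
    by (simp add: algebra_simps sum.distrib sum_distrib_left)
qed

lemma convex_common_strict_point:
  fixes F :: "'a::real_inner set"
  assumes F: "convex F" "F \<noteq> {}" and "finite R"
    and "\<And>g x. g \<in> R \<Longrightarrow> x \<in> F \<Longrightarrow> x \<bullet> a g \<le> b g"
    and "\<And>g. g \<in> R \<Longrightarrow> \<exists>x\<in>F. x \<bullet> a g < b g"
  shows "\<exists>x\<in>F. \<forall>g\<in>R. x \<bullet> a g < b g"
  using assms(3-)
proof (induction R rule: finite_induct)
  case empty
  then show ?case using F(2) by blast
next
  case (insert g R)
  obtain x where x: "x \<in> F" "\<forall>h\<in>R. x \<bullet> a h < b h" using insert by blast
  obtain p where p: "p \<in> F" "p \<bullet> a g < b g" using insert.prems by blast
  let ?m = "(1/2) *\<^sub>R x + (1/2) *\<^sub>R p"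
  have "?m \<in> F" using convexD[OF F(1) x(1) p(1), of "1/2" "1/2"] by simp
  moreover have "?m \<bullet> a h < b h" if "h \<in> insert g R" for h
  proof -
    have "x \<bullet> a h \<le> b h" "p \<bullet> a h \<le> b h" using insert.prems(1) that x(1) p(1) by auto
    moreover have "x \<bullet> a h < b h \<or> p \<bullet> a h < b h" using that x(2) p(2) by auto
    ultimately have "x \<bullet> a h + p \<bullet> a h < 2 * b h" by linarith
    then show ?thesis by (simp add: inner_add_left)
  qed
  ultimately show ?case by blast
qed

lemma face_of_symmetric_points:
  assumes "T face_of S" "x \<in> T" "x + d \<in> S" "x - d \<in> S"
  shows "x + d \<in> T"
proof (cases "d = 0")
  case False
  have "(x + d) - (x - d) = 2 *\<^sub>R d" by (simp add: scaleR_2)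
  then have "x + d \<noteq> x - d" using False by (metis diff_self scaleR_eq_0_iff zero_neq_numeral)
  then have "midpoint (x + d) (x - d) \<in> open_segment (x + d) (x - d)" by simp
  moreover have "midpoint (x + d) (x - d) = x" unfolding midpoint_def by (simp add: scaleR_add_right scaleR_diff_right scaleR_add_left[symmetric])
  ultimately show ?thesis using face_ofD[OF assms(1)] assms(2-4) by metis
qed (use assms in simp)

locale voronoi_face =
  fixes M :: "real^'e^'r" and F :: "(real^'e) set"
  assumes unimodular: "totally_unimodular M"
    and face: "F face_of voronoi0 M"
    and nonempty: "F \<noteq> {}"
begin

lemma face_subset_flows: "F \<subseteq> flows M"
  using face_of_imp_subset[OF face] voronoi0_eq_circuit_halfspaces[OF unimodular] by blast

lemma circuit_ineq: "x \<in> F \<Longrightarrow> g \<in> lattice_circuits M \<Longrightarrow> 2 * (x \<bullet> g) \<le> (norm g)\<^sup>2"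
  using face_of_imp_subset[OF face] voronoi0_eq_circuit_halfspaces[OF unimodular] by blast

lemma inner_le_l1_norm: "x \<in> F \<Longrightarrow> v \<in> flows M \<Longrightarrow> 2 * (x \<bullet> v) \<le> l1_norm v"
  using inner_le_l1_norm_if_circuit_ineqs[OF unimodular] circuit_ineq by blast

lemma tight_circuits_subset: "Ucirc M F \<subseteq> lattice_circuits M"
  unfolding Ucirc_def by auto

lemma finite_tight_circuits: "finite (Ucirc M F)"
  using finite_subset[OF tight_circuits_subset finite_lattice_circuits] .

lemma tight_circuit_eq:
  assumes "x \<in> F" "g \<in> Ucirc M F"
  shows "2 * (x \<bullet> g) = l1_norm g"
proof -
  have "g \<in> lattice_circuits M" "2 * (x \<bullet> g) = (norm g)\<^sup>2"
    using assms unfolding Ucirc_def Fgamma_def by auto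
  then show ?thesis using lattice_circuit_norm_sq by simp
qed

text \<open>In a conformal decomposition of a flow on which every point of \<open>F\<close> is tight, each
  circuit that occurs must be tight on \<open>F\<close> as well.\<close>
lemma tight_flow_in_span:
  assumes w: "w \<in> flows M" and tight: "\<forall>x\<in>F. 2 * (x \<bullet> w) = l1_norm w"
  shows "w \<in> span (Ucirc M F)"
proof -
  obtain \<alpha> where \<alpha>: "\<forall>g. 0 \<le> \<alpha> g" "\<forall>g\<in>lattice_circuits M. \<alpha> g \<noteq> 0 \<longrightarrow> conforms g w"
      "w = (\<Sum>g\<in>lattice_circuits M. \<alpha> g *\<^sub>R g)"
    using conformal_decomposition[OF unimodular w] by blast
  have "g \<in> Ucirc M F" if g: "g \<in> lattice_circuits M" "\<alpha> g \<noteq> 0" for g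
  proof -
    have "2 * (x \<bullet> g) = (norm g)\<^sup>2" if x: "x \<in> F" for x
    proof -
      let ?slack = "\<lambda>h. \<alpha> h * (l1_norm h - 2 * (x \<bullet> h))"
      have nonneg: "0 \<le> ?slack h" if "h \<in> lattice_circuits M" for h
        using circuit_ineq[OF x that] lattice_circuit_norm_sq[OF that] \<alpha>(1) by simp
      have "l1_norm w = (\<Sum>h\<in>lattice_circuits M. \<alpha> h * l1_norm h)"
        using l1_norm_conformal_sum[OF finite_lattice_circuits _ _ \<alpha>(3)] \<alpha>(1,2) by simp
      moreover have "x \<bullet> w = (\<Sum>h\<in>lattice_circuits M. \<alpha> h * (x \<bullet> h))"
        by (subst \<alpha>(3)) (simp add: inner_sum_right)
      ultimately have "(\<Sum>h\<in>lattice_circuits M. ?slack h) = l1_norm w - 2 * (x \<bullet> w)"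
        by (simp add: algebra_simps sum_subtractf sum_distrib_left)
      also have "\<dots> = 0" using tight x by simp
      finally have "?slack g = 0"
        using sum_nonneg_eq_0_iff[OF finite_lattice_circuits[of M], of ?slack] nonneg g(1) by simp
      then show ?thesis using g(2) lattice_circuit_norm_sq[OF g(1)] by simp
    qed
    then show ?thesis using g(1) face_subset_flows unfolding Ucirc_def Fgamma_def by auto
  qed
  then have "\<alpha> g *\<^sub>R g \<in> span (Ucirc M F)" if "g \<in> lattice_circuits M" for g
    using that by (cases "\<alpha> g = 0") (auto intro: span_scale span_base simp: span_zero)
  then show ?thesis unfolding \<alpha>(3) by (rule span_sum)
qed

lemma tight_circuit_sum_flow: "\<Sum>(Ucirc M F) \<in> flows M"
  using tight_circuits_subset lattice_circuit_flow by (intro subspace_sum subspace_flows) blast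

lemma inner_tight_circuit_sum: "x \<in> F \<Longrightarrow> 2 * (x \<bullet> \<Sum>(Ucirc M F)) = (\<Sum>g\<in>Ucirc M F. l1_norm g)"
  using tight_circuit_eq by (simp add: inner_sum_right sum_distrib_left)

text \<open>No cancellation occurs in \<open>\<Sum>(Ucirc M F)\<close>: for \<open>x \<in> F\<close> the triangle inequality
  \<open>\<parallel>\<Sum>(Ucirc M F)\<parallel>\<^sub>1 \<le> \<Sum>\<parallel>g\<parallel>\<^sub>1 = 2 \<langle>x, \<Sum>(Ucirc M F)\<rangle>\<close> is reversed by \<open>inner_le_l1_norm\<close>.\<close>
lemma abs_tight_circuit_sum: "\<bar>\<Sum>(Ucirc M F) $ e\<bar> = (\<Sum>g\<in>Ucirc M F. \<bar>g $ e\<bar>)"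
proof -
  let ?y = "\<Sum>(Ucirc M F)"
  have le: "\<bar>?y $ e\<bar> \<le> (\<Sum>g\<in>Ucirc M F. \<bar>g $ e\<bar>)" for e
    unfolding sum_component by (rule sum_abs)
  obtain x0 where "x0 \<in> F" using nonempty by blast
  have "(\<Sum>e\<in>UNIV. \<Sum>g\<in>Ucirc M F. \<bar>g $ e\<bar>) = 2 * (x0 \<bullet> ?y)"
    unfolding inner_tight_circuit_sum[OF \<open>x0 \<in> F\<close>] l1_norm_def by (rule sum.swap)
  also have "\<dots> \<le> (\<Sum>e\<in>UNIV. \<bar>?y $ e\<bar>)"
    using inner_le_l1_norm[OF \<open>x0 \<in> F\<close> tight_circuit_sum_flow] unfolding l1_norm_def .
  moreover have "(\<Sum>e\<in>UNIV. \<bar>?y $ e\<bar>) \<le> (\<Sum>e\<in>UNIV. \<Sum>g\<in>Ucirc M F. \<bar>g $ e\<bar>)"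
    by (intro sum_mono le)
  ultimately have "(\<Sum>e\<in>UNIV. \<bar>?y $ e\<bar>) = (\<Sum>e\<in>UNIV. \<Sum>g\<in>Ucirc M F. \<bar>g $ e\<bar>)"
    by linarith
  then show ?thesis
    using sum_mono_inv[of "\<lambda>e. \<bar>?y $ e\<bar>" UNIV "\<lambda>e. \<Sum>g\<in>Ucirc M F. \<bar>g $ e\<bar>" e] le by simp
qed

lemma tight_circuit_sum_tight: "x \<in> F \<Longrightarrow> 2 * (x \<bullet> \<Sum>(Ucirc M F)) = l1_norm (\<Sum>(Ucirc M F))"
  unfolding inner_tight_circuit_sum l1_norm_def abs_tight_circuit_sum by (rule sum.swap)

lemma abs_tight_circuit_sum_ge_one:
  assumes "e \<in> (\<Union>g\<in>Ucirc M F. supp g)"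
  shows "1 \<le> \<bar>\<Sum>(Ucirc M F) $ e\<bar>"
proof -
  obtain g where g: "g \<in> Ucirc M F" "g $ e \<noteq> 0" using assms unfolding supp_def by blast
  moreover have "g $ e \<in> {-1, 0, 1}"
    using g(1) tight_circuits_subset by (intro lattice_circuit_entry) blast
  ultimately have "\<bar>g $ e\<bar> = 1" by auto
  then show ?thesis unfolding abs_tight_circuit_sum
    using member_le_sum[OF g(1), of "\<lambda>h. \<bar>h $ e\<bar>"] finite_tight_circuits by simp
qed

text \<open>Perturbing the tight flow \<open>\<Sum>(Ucirc M F)\<close>, whose support is exactly the union of the
  tight circuits, by a small multiple of \<open>\<pm>z\<close> keeps its sign pattern, so the slack
  \<open>\<parallel>w\<parallel>\<^sub>1 - 2 \<langle>x, w\<rangle> \<ge> 0\<close> is affine along the perturbation and vanishes at its centre.\<close>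
lemma supported_flow_in_span:
  assumes z: "z \<in> flows M" "supp z \<subseteq> (\<Union>g\<in>Ucirc M F. supp g)"
  shows "z \<in> span (Ucirc M F)"
proof -
  define y where "y = \<Sum>(Ucirc M F)"
  define k where "k = l1_norm z + 1"
  define \<sigma> where "\<sigma> = (\<Sum>e\<in>UNIV. sgn (y $ e) * z $ e)"
  have "l1_norm z < k" unfolding k_def by simp
  have zero: "z $ e = 0" if "y $ e = 0" for e
    using z(2) abs_tight_circuit_sum_ge_one[of e] that unfolding y_def supp_def by fastforce
  have big: "1 \<le> \<bar>y $ e\<bar>" if "y $ e \<noteq> 0" for e
  proof -
    have "e \<in> (\<Union>g\<in>Ucirc M F. supp g)"
      using that unfolding y_def supp_def sum_component by (auto intro: sum.neutral)
    then show ?thesis unfolding y_def by (rule abs_tight_circuit_sum_ge_one)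
  qed
  have l1: "l1_norm (s *\<^sub>R z + k *\<^sub>R y) = s * \<sigma> + k * l1_norm y" if "\<bar>s\<bar> = 1" for s
    unfolding \<sigma>_def using zero big that \<open>l1_norm z < k\<close> by (rule l1_norm_small_perturbation)
  have flow: "s *\<^sub>R z + k *\<^sub>R y \<in> flows M" for s
    using z(1) tight_circuit_sum_flow unfolding y_def by (intro subspace_add subspace_scale subspace_flows)
  have "2 * (x \<bullet> (z + k *\<^sub>R y)) = l1_norm (z + k *\<^sub>R y)" if x: "x \<in> F" for x
  proof -
    have slack: "l1_norm (s *\<^sub>R z + k *\<^sub>R y) - 2 * (x \<bullet> (s *\<^sub>R z + k *\<^sub>R y)) = s * (\<sigma> - 2 * (x \<bullet> z))"
      if "\<bar>s\<bar> = 1" for s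
      using l1[OF that] tight_circuit_sum_tight[OF x] unfolding y_def[symmetric]
      by (simp add: inner_add_right algebra_simps)
    have "0 \<le> s * (\<sigma> - 2 * (x \<bullet> z))" if "\<bar>s\<bar> = 1" for s
      using inner_le_l1_norm[OF x flow[of s]] slack[OF that] by simp
    from this[of 1] this[of "-1"] have "\<sigma> = 2 * (x \<bullet> z)" by simp
    then show ?thesis using slack[of 1] by simp
  qed
  then have "z + k *\<^sub>R y \<in> span (Ucirc M F)"
    using flow[of 1] by (intro tight_flow_in_span) auto
  moreover have "y \<in> span (Ucirc M F)" unfolding y_def by (intro span_sum span_base)
  ultimately have "(z + k *\<^sub>R y) - k *\<^sub>R y \<in> span (Ucirc M F)" by (intro span_diff span_scale)
  then show ?thesis by simp
qed

lemma kernel_on_tight_support_eq_span: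
  "{x. supp x \<subseteq> (\<Union>g\<in>Ucirc M F. supp g) \<and> M *v x = 0} = span (Ucirc M F)"
proof
  show "{x. supp x \<subseteq> (\<Union>g\<in>Ucirc M F. supp g) \<and> M *v x = 0} \<subseteq> span (Ucirc M F)"
    using supported_flow_in_span unfolding flows_def by blast
  have "Ucirc M F \<subseteq> {x. supp x \<subseteq> (\<Union>g\<in>Ucirc M F. supp g)} \<inter> flows M"
    using tight_circuits_subset lattice_circuit_flow by blast
  then have "span (Ucirc M F) \<subseteq> {x. supp x \<subseteq> (\<Union>g\<in>Ucirc M F. supp g)} \<inter> flows M"
    by (intro span_minimal subspace_inter subspace_supported subspace_flows)
  then show "span (Ucirc M F) \<subseteq> {x. supp x \<subseteq> (\<Union>g\<in>Ucirc M F. supp g) \<and> M *v x = 0}"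
    unfolding flows_def by blast
qed


definition tangent_flows :: "(real^'e) set" where
  "tangent_flows = {y \<in> flows M. \<forall>a\<in>span (Ucirc M F). Linear_Algebra.orthogonal a y}"

lemma subspace_tangent_flows: "subspace tangent_flows"
  unfolding tangent_flows_def
  using subspace_inter[OF subspace_flows subspace_orthogonal_to_vectors[of "span (Ucirc M F)"]]
  by (simp add: Int_def)

lemma exists_point_strict_off_tight:
  obtains x1 where "x1 \<in> F" "\<And>g. g \<in> lattice_circuits M - Ucirc M F \<Longrightarrow> 2 * (x1 \<bullet> g) < (norm g)\<^sup>2"
proof -
  have "\<exists>x\<in>F. 2 * (x \<bullet> g) < (norm g)\<^sup>2" if "g \<in> lattice_circuits M - Ucirc M F" for g
  proof -
    have "\<not> F \<subseteq> Fgamma M g" using that unfolding Ucirc_def by auto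
    then obtain x where "x \<in> F" "x \<notin> Fgamma M g" by blast
    then have "x \<in> F" "2 * (x \<bullet> g) \<noteq> (norm g)\<^sup>2"
      using face_subset_flows unfolding Fgamma_def by auto
    then show ?thesis using circuit_ineq[of x g] that by force
  qed
  then have "\<exists>x\<in>F. \<forall>g\<in>lattice_circuits M - Ucirc M F. x \<bullet> g < (norm g)\<^sup>2 / 2"
    using circuit_ineq face_of_imp_convex[OF face] nonempty finite_lattice_circuits
    by (intro convex_common_strict_point) (force simp: field_simps)+
  then show thesis using that by (force simp: field_simps)
qed

lemma face_contains_tangent_ball:
  obtains x1 r where "x1 \<in> F" "0 < r" "\<And>d. d \<in> tangent_flows \<Longrightarrow> norm d < r \<Longrightarrow> x1 + d \<in> F"
proof -
  obtain x1 where x1: "x1 \<in> F" "\<And>g. g \<in> lattice_circuits M - Ucirc M F \<Longrightarrow> 2 * (x1 \<bullet> g) < (norm g)\<^sup>2"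
    by (rule exists_point_strict_off_tight) blast
  define R where "R = lattice_circuits M - Ucirc M F"
  define N where "N = (\<Inter>g\<in>R. {d. g \<bullet> d < ((norm g)\<^sup>2 - 2 * (x1 \<bullet> g)) / 2})"
  have "open N" unfolding N_def R_def using finite_lattice_circuits
    by (intro open_INT ballI open_halfspace_lt) auto
  moreover have "0 \<in> N" unfolding N_def R_def using x1(2) by auto
  ultimately obtain r where r: "0 < r" "ball 0 r \<subseteq> N" by (meson open_contains_ball)
  have in_V0: "x1 + d \<in> voronoi0 M" if d: "d \<in> tangent_flows" "norm d < r" for d
    unfolding voronoi0_eq_circuit_halfspaces[OF unimodular]
  proof (intro CollectI conjI ballI)
    show "x1 + d \<in> flows M"
      using x1(1) face_subset_flows d(1) unfolding tangent_flows_def by (blast intro: subspace_add subspace_flows)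
    fix g assume g: "g \<in> lattice_circuits M"
    show "2 * ((x1 + d) \<bullet> g) \<le> (norm g)\<^sup>2"
    proof (cases "g \<in> Ucirc M F")
      case True
      then have "d \<bullet> g = 0"
        using d(1) span_base[OF True] unfolding tangent_flows_def Linear_Algebra.orthogonal_def
        by (auto simp: inner_commute)
      then show ?thesis using circuit_ineq[OF x1(1) g] by (simp add: inner_add_left)
    next
      case False
      then have "d \<in> N" "g \<in> R" using r(2) d(2) g unfolding R_def by (auto simp: dist_norm)
      then have "2 * (d \<bullet> g) < (norm g)\<^sup>2 - 2 * (x1 \<bullet> g)" unfolding N_def by (auto simp: inner_commute)
      then show ?thesis by (simp add: inner_add_left)
    qed
  qed
  have "x1 + d \<in> F" if "d \<in> tangent_flows" "norm d < r" for d
    using face_of_symmetric_points[OF face x1(1) in_V0[OF that]] in_V0[of "-d"] that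
      subspace_neg[OF subspace_tangent_flows] by simp
  with x1(1) r(1) that show thesis by blast
qed

lemma aff_dim_face: "aff_dim F = int (dim tangent_flows)"
proof -
  obtain x1 r where x1: "x1 \<in> F" and r: "0 < r"
    and ball: "\<And>d. d \<in> tangent_flows \<Longrightarrow> norm d < r \<Longrightarrow> x1 + d \<in> F"
    by (rule face_contains_tangent_ball) blast
  let ?T = "(+) (- x1) ` F"
  have "?T \<subseteq> tangent_flows"
  proof
    fix t assume "t \<in> ?T"
    then obtain x where x: "x \<in> F" "t = x - x1" by auto
    have "t \<in> flows M" using x x1 face_subset_flows subspace_flows by (blast intro: subspace_diff)
    moreover have "Linear_Algebra.orthogonal t g" if "g \<in> Ucirc M F" for g
      using tight_circuit_eq[OF x(1) that] tight_circuit_eq[OF x1 that]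
      unfolding x(2) Linear_Algebra.orthogonal_def by (simp add: inner_diff_left)
    then have "Linear_Algebra.orthogonal a t" if "a \<in> span (Ucirc M F)" for a
      using orthogonal_to_span[OF that, of t] orthogonal_commute by blast
    ultimately show "t \<in> tangent_flows" unfolding tangent_flows_def by blast
  qed
  then have "dim ?T \<le> dim tangent_flows" by (rule dim_subset)
  moreover have "tangent_flows \<inter> ball 0 r \<subseteq> ?T"
  proof
    fix d assume "d \<in> tangent_flows \<inter> ball 0 r"
    then have "x1 + d \<in> F" using ball by simp
    then show "d \<in> ?T" by (rule rev_image_eqI) simp
  qed
  then have "dim (tangent_flows \<inter> ball 0 r) \<le> dim ?T" by (rule dim_subset)
  moreover have "dim (tangent_flows \<inter> ball 0 r) = dim tangent_flows"
    using r subspace_0[OF subspace_tangent_flows]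
    by (intro dim_openin subspace_tangent_flows openin_open_Int) auto
  ultimately have "dim ?T = dim tangent_flows" by linarith
  then show ?thesis using aff_dim_eq_dim[OF hull_inc[OF x1]] by simp
qed

lemma dim_tangent_flows: "dim tangent_flows + dim (span (Ucirc M F)) = dim (flows M)"
proof -
  have "span (Ucirc M F) \<subseteq> flows M"
    using tight_circuits_subset lattice_circuit_flow by (intro span_minimal subspace_flows) blast
  then show ?thesis
    unfolding tangent_flows_def by (rule dim_subspace_orthogonal_to_vectors[OF subspace_span subspace_flows])
qed

end

theorem mainTheorem18:
  fixes M :: "real^'e^'r" and F :: "(real^'e) set"
  assumes "totally_unimodular M"
    and "F face_of voronoi0 M" and "F \<noteq> {}"
  shows "codim_in_flows M F = int (genus M (phi M F))"
proof -
  interpret voronoi_face M F using assms by unfold_locales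
  have "genus M (phi M F) = dim (span (Ucirc M F))"
    unfolding genus_def phi_def Let_def fst_conv kernel_on_tight_support_eq_span by simp
  then show ?thesis
    unfolding codim_in_flows_def aff_dim_face using dim_tangent_flows by linarith
qed

end
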